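(* Let $A$ and $B$ be inertial bodies with reference frames $O_A$ and $O_B$ whose origins coincide, and let $L_{BA}:O_B\to O_A$ be the linear map sending the coordinates $(x,\tau)^T$ of an event in $O_B$ to the coordinates of the same event in $O_A$. Then the vectors $(1,1)^T$ and $(-1,1)^T$ are eigenvectors of $L_{BA}$.
   Context: Model: elementary bodies move on a one-dimensional discrete environment; at each integer time step an elementary body either moves one unit of space in its current direction (an "elementary motion", a straight world-line segment) or turns (reverses direction without moving). Hence in the absolute reference frame (space coordinate $x$, time $t$, events written as column vectors $(x,t)^T$), world lines of elementary motions going out from the origin have the direction of $(1,1)^T$ (rightward motion) or of $(-1,1)^T$ (leftward motion); the direction of a vector $\bar a$ is the set $\{\lambda\bar a\mid\lambda>0\}$. A body is a finite set of elementary bodies; a body is inertial if its absolute spatial velocity and proper time velocity are constant. Each inertial body $B$ carries a reference frame $O_B$ (coordinates: space coordinate and proper time $\tau_B$ of $B$), and the only restriction imposed on inertial reference frames is that the space-time coordinates of the same event in two inertial frames are related by an affine transformation; when origins coincide this transformation is linear. In the model the two directions of elementary motions are physical (frame-independent) directions: in every inertial reference frame the rightward and leftward elementary motions from the origin have directions $(1,1)^T$ and $(-1,1)^T$ respectively. *)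

theory Defs
  imports "HOL-Analysis.Analysis"
begin

text \<open>Events are column vectors (x, t) in real^2, written as pairs (space, time).\<close>

definition direction :: "real \<times> real \<Rightarrow> (real \<times> real) set" where
  "direction a = {l *\<^sub>R a | l. l > 0}"

definition eigenvector :: "(real \<times> real \<Rightarrow> real \<times> real) \<Rightarrow> real \<times> real \<Rightarrow> bool" where
  "eigenvector L v \<longleftrightarrow> v \<noteq> 0 \<and> (\<exists>c::real. L v = c *\<^sub>R v)"

end

theory Submission
  imports Defs
begin

text \<open>A map sending the ray through a nonzero vector v into itself sends v to a positive
multiple of v, so v is an eigenvector.\<close>

lemma direction_self: "a \<in> direction a"
  unfolding direction_def by (rule CollectI, rule exI[of _ 1]) simp

lemma eigenvector_if_image_direction_subset:
  fixes L :: "real \<times> real \<Rightarrow> real \<times> real"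
  assumes "L ` direction v \<subseteq> direction v" and "v \<noteq> 0"
  shows "eigenvector L v"
proof -
  have "L v \<in> direction v"
    using assms(1) direction_self by blast
  then obtain l where "L v = l *\<^sub>R v"
    unfolding direction_def by blast
  with assms(2) show ?thesis
    unfolding eigenvector_def by blast
qed

theorem lemma1:
  fixes L_BA :: "real \<times> real \<Rightarrow> real \<times> real"
  assumes "linear L_BA"
    and right: "L_BA ` direction (1, 1) = direction (1, 1)"
    and left: "L_BA ` direction (-1, 1) = direction (-1, 1)"
  shows "eigenvector L_BA (1, 1) \<and> eigenvector L_BA (-1, 1)"
proof
  show "eigenvector L_BA (1, 1)"
    using right by (intro eigenvector_if_image_direction_subset) (simp_all add: zero_prod_def)
  show "eigenvector L_BA (-1, 1)"
    using left by (intro eigenvector_if_image_direction_subset) (simp_all add: zero_prod_def)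
qed

end
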